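(* Fix integers $N\ge 2$ and $K\ge 1$. There exists a Boolean tensor $\mathcal{B}\in\{0,1\}^{N\times N\times K}$ such that no ranking tensor in $\pi(\mathcal{M}^{\text{DISTMULT}})$ is consistent with $\mathcal{B}$.
   Context: A score-based model assigns a score $s_k(i,j)\in\mathbb{R}$ to each triple, $i,j\in\{1,\dots,N\}$, $k\in\{1,\dots,K\}$; its scoring tensor has frontal slices $\mathbf{S}_k$ with $[\mathbf{S}_k]_{ij}=s_k(i,j)$. For a real $N\times N$ matrix $\mathbf{S}$, $\pi(\mathbf{S})$ is the matrix of dense ranks: $\pi_{ij}(\mathbf{S})=1+$ (number of distinct values among entries of $\mathbf{S}$ strictly larger than $s_{ij}$). For tensors, $\pi$ acts slicewise; for a set $X$, $\pi(X)=\{\pi(x):x\in X\}$. DISTMULT of size $r$: parameters $\mathbf{A}\in\mathbb{R}^{N\times r}$ (rows $\mathbf{a}_i$), $\mathbf{R}\in\mathbb{R}^{K\times r}$ (rows $\mathbf{r}_k$), score $\mathbf{a}_i^T\mathrm{diag}(\mathbf{r}_k)\mathbf{a}_j$; $\mathcal{M}^{\text{DISTMULT}}$ is the set of scoring tensors of all DISTMULT models of all sizes $r\in\mathbb{N}^+$. A ranking tensor $\mathcal{P}$ is consistent with a Boolean tensor $\mathcal{B}$ if for every $k$ and all $i,j,i',j'$: $b_{ijk}=1$ and $b_{i'j'k}=0$ imply $p_{ijk}<p_{i'j'k}$. *)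

theory Defs
  imports Complex_Main
begin

text \<open>Tensors of size N x N x K are functions nat => nat => nat => _, with indices
  i, j < N and k < K (0-based); values outside this range are irrelevant.\<close>

definition distmult_score ::
  "nat \<Rightarrow> (nat \<Rightarrow> nat \<Rightarrow> real) \<Rightarrow> (nat \<Rightarrow> nat \<Rightarrow> real) \<Rightarrow> nat \<Rightarrow> nat \<Rightarrow> nat \<Rightarrow> real" where
  "distmult_score r A R i j k = (\<Sum>l<r. A i l * R k l * A j l)"

definition dense_rank :: "nat \<Rightarrow> (nat \<Rightarrow> nat \<Rightarrow> real) \<Rightarrow> nat \<Rightarrow> nat \<Rightarrow> nat" where
  "dense_rank N S i j = 1 + card {v. (\<exists>i' j'. i' < N \<and> j' < N \<and> v = S i' j') \<and> v > S i j}"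

definition rank_tensor :: "nat \<Rightarrow> (nat \<Rightarrow> nat \<Rightarrow> nat \<Rightarrow> real) \<Rightarrow> nat \<Rightarrow> nat \<Rightarrow> nat \<Rightarrow> nat" where
  "rank_tensor N T i j k = dense_rank N (\<lambda>a b. T a b k) i j"

definition consistent ::
  "nat \<Rightarrow> nat \<Rightarrow> (nat \<Rightarrow> nat \<Rightarrow> nat \<Rightarrow> nat) \<Rightarrow> (nat \<Rightarrow> nat \<Rightarrow> nat \<Rightarrow> bool) \<Rightarrow> bool" where
  "consistent N K P B \<longleftrightarrow>
     (\<forall>k<K. \<forall>i<N. \<forall>j<N. \<forall>i'<N. \<forall>j'<N.
        B i j k \<and> \<not> B i' j' k \<longrightarrow> P i j k < P i' j' k)"

definition distmult_rankings :: "nat \<Rightarrow> (nat \<Rightarrow> nat \<Rightarrow> nat \<Rightarrow> nat) set" where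
  "distmult_rankings N = {rank_tensor N (distmult_score r A R) | r A R. r \<ge> 1}"

end

theory Submission
  imports Defs
begin

text \<open>DISTMULT scores are symmetric in the two entities, so every DISTMULT ranking
  tensor is symmetric, while consistency with a Boolean tensor that contains a triple
  (0,1,k) but not (1,0,k) would force the rank of (0,1,k) strictly below that of (1,0,k).\<close>

lemma distmult_score_sym: "distmult_score r A R i j k = distmult_score r A R j i k"
  unfolding distmult_score_def by (simp add: mult_ac)

lemma dense_rank_cong_value:
  assumes "S i j = S i' j'"
  shows "dense_rank N S i j = dense_rank N S i' j'"
  unfolding dense_rank_def using assms by simp

lemma distmult_rankings_sym:
  assumes "P \<in> distmult_rankings N"
  shows "P i j k = P j i k"
proof -
  obtain r A R where "P = rank_tensor N (distmult_score r A R)"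
    using assms unfolding distmult_rankings_def by blast
  then show ?thesis
    unfolding rank_tensor_def
    using dense_rank_cong_value[of "\<lambda>a b. distmult_score r A R a b k" i j j i N]
    by (simp add: distmult_score_sym)
qed

lemma consistent_rank_less:
  assumes "consistent N K P B" "k < K" "i < N" "j < N" "i' < N" "j' < N"
    and "B i j k" "\<not> B i' j' k"
  shows "P i j k < P i' j' k"
  using assms unfolding consistent_def by blast

theorem theorem9:
  fixes N K :: nat
  assumes "N \<ge> 2" and "K \<ge> 1"
  shows "\<exists>B :: nat \<Rightarrow> nat \<Rightarrow> nat \<Rightarrow> bool.
           \<not> (\<exists>P \<in> distmult_rankings N. consistent N K P B)"
proof (intro exI[of _ "\<lambda>i j k. i = 0 \<and> j = 1"] notI)
  assume "\<exists>P \<in> distmult_rankings N. consistent N K P (\<lambda>i j k. i = 0 \<and> j = 1)"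
  then obtain P where P: "P \<in> distmult_rankings N"
    and cons: "consistent N K P (\<lambda>i j k. i = 0 \<and> j = 1)"
    by blast
  have "P 0 1 0 < P 1 0 0"
    using consistent_rank_less[OF cons, of 0 0 1 1 0] assms by simp
  moreover have "P 0 1 0 = P 1 0 0"
    using distmult_rankings_sym[OF P] .
  ultimately show False
    by simp
qed

end
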